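(* Let $f_1,\dots,f_m:\mathbb R^n\to\mathbb R$ be continuously differentiable, $\mu\ge0$, $\gamma_0>0$, $x_0,z_0\in\mathbb R^n$, and let $(\tau_k)_{k\ge0}$ be positive step sizes. Suppose sequences $(\gamma_k),(x_k),(z_k),(y_k)$ satisfy, for all $k\ge0$, the IMEX scheme $$\frac{\gamma_{k+1}-\gamma_k}{\tau_k}=\mu-\gamma_{k+1},\quad \frac{x_{k+1}-x_k}{\tau_k}=z_{k+1}-x_{k+1},\quad \gamma_k\frac{z_{k+1}-z_k}{\tau_k}=\mu(y_k-z_{k+1})-\mathrm{proj}_{C(y_k)}(w_{k+1}),$$ where $y_k=(x_k+\tau_kz_k)/(1+\tau_k)$ and $w_{k+1}=-\mu(z_{k+1}-y_k)+\gamma_k\frac{x_{k+1}-x_k}{\tau_k}-\gamma_k\frac{z_{k+1}-z_k}{\tau_k}$. Then for all $k\ge0$, $$\big\langle\mathrm{proj}_{C(y_k)}(w_{k+1}),x_{k+1}-x_k\big\rangle=\max_{1\le j\le m}\langle\nabla f_j(y_k),x_{k+1}-x_k\rangle.$$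
   Context: $C(y)=\mathrm{conv}\{\nabla f_1(y),\dots,\nabla f_m(y)\}$ and $\mathrm{proj}_C$ is the Euclidean projection onto the closed convex set $C$. *)

theory Defs
  imports "HOL-Analysis.Analysis"
begin

definition gradC :: "nat \<Rightarrow> (nat \<Rightarrow> 'a::euclidean_space \<Rightarrow> 'a) \<Rightarrow> 'a \<Rightarrow> 'a set" where
  "gradC m gf y = convex hull ((\<lambda>j. gf j y) ` {1..m})"

definition proj :: "'a::euclidean_space set \<Rightarrow> 'a \<Rightarrow> 'a" where
  "proj S v = closest_point S v"

end

theory Submission
  imports Defs
begin

text \<open>The z-update says that w minus its projection p onto C(y) is the positive multiple
  (gamma_k / tau_k) d of the step d = x_(k+1) - x_k. The variational inequality of the
  projection then makes p maximise the linear functional p |-> p . d over C(y), and a linear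
  functional attains its maximum over a convex hull at one of the generating points, the
  gradients of the f_j at y. Positivity of gamma_k comes from the implicit update
  gamma_(k+1) = (gamma_k + tau_k mu) / (1 + tau_k).\<close>

lemma implicit_relaxation_pos:
  fixes \<gamma> \<tau> :: "nat \<Rightarrow> real" and \<mu> :: real
  assumes "\<mu> \<ge> 0" and "\<gamma> 0 > 0" and "\<And>k. \<tau> k > 0"
    and step: "\<And>k. (\<gamma> (Suc k) - \<gamma> k) / \<tau> k = \<mu> - \<gamma> (Suc k)"
  shows "\<gamma> n > 0"
proof (induction n)
  case 0
  then show ?case using assms(2) .
next
  case (Suc n)
  have "\<tau> n > 0" using assms(3) .
  then have "\<gamma> (Suc n) * (1 + \<tau> n) = \<gamma> n + \<tau> n * \<mu>"
    using step[of n] by (simp add: field_simps)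
  moreover have "\<gamma> n + \<tau> n * \<mu> > 0"
    using Suc.IH \<open>\<tau> n > 0\<close> assms(1) by (simp add: add_pos_nonneg)
  ultimately show ?case
    using \<open>\<tau> n > 0\<close> by (metis add_pos_pos zero_less_mult_pos2 zero_less_one)
qed

lemma inner_le_Max_convex_hull:
  fixes S :: "'a::real_inner set"
  assumes "finite S" and "p \<in> convex hull S"
  shows "p \<bullet> d \<le> Max ((\<lambda>s. s \<bullet> d) ` S)"
proof -
  let ?M = "Max ((\<lambda>s. s \<bullet> d) ` S)"
  have "S \<subseteq> {q. d \<bullet> q \<le> ?M}"
    using assms(1) by (auto intro!: Max_ge simp: inner_commute)
  then have "convex hull S \<subseteq> {q. d \<bullet> q \<le> ?M}"
    by (rule hull_minimal) (rule convex_halfspace_le)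
  then show ?thesis
    using assms(2) by (auto simp: inner_commute)
qed

lemma closest_point_convex_hull_inner_eq_Max:
  fixes S :: "'a::euclidean_space set"
  assumes "finite S" and "S \<noteq> {}" and "c > 0"
    and normal: "w - closest_point (convex hull S) w = c *\<^sub>R d"
  shows "closest_point (convex hull S) w \<bullet> d = Max ((\<lambda>s. s \<bullet> d) ` S)"
proof -
  let ?p = "closest_point (convex hull S) w"
  have closed: "closed (convex hull S)"
    using assms(1) by (simp add: compact_convex_hull finite_imp_compact compact_imp_closed)
  have "?p \<in> convex hull S"
    using closest_point_in_set[OF closed] assms(2) by simp
  then have le: "?p \<bullet> d \<le> Max ((\<lambda>s. s \<bullet> d) ` S)"
    using assms(1) by (rule inner_le_Max_convex_hull[rotated])
  have ge: "s \<bullet> d \<le> ?p \<bullet> d" if "s \<in> S" for s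
  proof -
    have "(w - ?p) \<bullet> (s - ?p) \<le> 0"
      using that by (intro closest_point_dot[OF convex_convex_hull closed] hull_inc)
    then have "c * (d \<bullet> (s - ?p)) \<le> 0"
      by (simp add: normal)
    then have "d \<bullet> (s - ?p) \<le> 0"
      using \<open>c > 0\<close> by (simp add: mult_le_0_iff)
    then show ?thesis
      by (simp add: inner_diff_right inner_commute)
  qed
  have "Max ((\<lambda>s. s \<bullet> d) ` S) \<in> (\<lambda>s. s \<bullet> d) ` S"
    using assms(1,2) by (intro Max_in) auto
  then show ?thesis
    using le ge by fastforce
qed

theorem mainTheorem9:
  fixes f :: "nat \<Rightarrow> 'a::euclidean_space \<Rightarrow> real"
    and gf :: "nat \<Rightarrow> 'a \<Rightarrow> 'a"
    and m :: nat and \<mu> :: real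
    and \<tau> \<gamma> :: "nat \<Rightarrow> real"
    and x z :: "nat \<Rightarrow> 'a"
  assumes m: "m \<ge> 1"
    and grad: "\<And>j y. j \<in> {1..m} \<Longrightarrow> (f j has_derivative (\<lambda>h. gf j y \<bullet> h)) (at y)"
    and C1: "\<And>j. j \<in> {1..m} \<Longrightarrow> continuous_on UNIV (gf j)"
    and mu: "\<mu> \<ge> 0"
    and gamma0: "\<gamma> 0 > 0"
    and tau: "\<And>k. \<tau> k > 0"
    and gamma_step: "\<And>k. (\<gamma> (Suc k) - \<gamma> k) / \<tau> k = \<mu> - \<gamma> (Suc k)"
    and x_step: "\<And>k. (1 / \<tau> k) *\<^sub>R (x (Suc k) - x k) = z (Suc k) - x (Suc k)"
    and z_step: "\<And>k. let y = (1 / (1 + \<tau> k)) *\<^sub>R (x k + \<tau> k *\<^sub>R z k);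
                         w = - (\<mu> *\<^sub>R (z (Suc k) - y))
                             + (\<gamma> k / \<tau> k) *\<^sub>R (x (Suc k) - x k)
                             - (\<gamma> k / \<tau> k) *\<^sub>R (z (Suc k) - z k)
                     in (\<gamma> k / \<tau> k) *\<^sub>R (z (Suc k) - z k)
                        = \<mu> *\<^sub>R (y - z (Suc k)) - proj (gradC m gf y) w"
  shows "\<forall>k. let y = (1 / (1 + \<tau> k)) *\<^sub>R (x k + \<tau> k *\<^sub>R z k);
                  w = - (\<mu> *\<^sub>R (z (Suc k) - y))
                      + (\<gamma> k / \<tau> k) *\<^sub>R (x (Suc k) - x k)
                      - (\<gamma> k / \<tau> k) *\<^sub>R (z (Suc k) - z k)
              in proj (gradC m gf y) w \<bullet> (x (Suc k) - x k)
                 = Max ((\<lambda>j. gf j y \<bullet> (x (Suc k) - x k)) ` {1..m})"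
  unfolding Let_def
proof
  fix k
  define y where "y = (1 / (1 + \<tau> k)) *\<^sub>R (x k + \<tau> k *\<^sub>R z k)"
  define w where "w = - (\<mu> *\<^sub>R (z (Suc k) - y))
                      + (\<gamma> k / \<tau> k) *\<^sub>R (x (Suc k) - x k)
                      - (\<gamma> k / \<tau> k) *\<^sub>R (z (Suc k) - z k)"
  let ?S = "(\<lambda>j. gf j y) ` {1..m}"
  have proj_eq: "proj (gradC m gf y) w = closest_point (convex hull ?S) w"
    by (simp add: proj_def gradC_def)
  have "w - closest_point (convex hull ?S) w = (\<gamma> k / \<tau> k) *\<^sub>R (x (Suc k) - x k)"
    using z_step[of k] unfolding Let_def y_def[symmetric] w_def[symmetric] proj_eq[symmetric]
    by (simp add: w_def algebra_simps)
  moreover have "\<gamma> k / \<tau> k > 0"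
    using implicit_relaxation_pos[OF mu gamma0 tau gamma_step] tau by simp
  ultimately have "closest_point (convex hull ?S) w \<bullet> (x (Suc k) - x k)
      = Max ((\<lambda>s. s \<bullet> (x (Suc k) - x k)) ` ?S)"
    using m by (intro closest_point_convex_hull_inner_eq_Max) auto
  then show "proj (gradC m gf y) w \<bullet> (x (Suc k) - x k)
      = Max ((\<lambda>j. gf j y \<bullet> (x (Suc k) - x k)) ` {1..m})"
    by (simp add: proj_eq image_image)
qed

end
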